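(* Let $G$ be a rooted graph, $(A,B)$ a separation of $G$, $\delta\in\mathbb N$, $H$ a graph in the $\delta$-folio of $G$, and $G_H$ a realization of $H$ in $G$ witnessed by $(\phi,\varphi)$. Let $Z=N_{G_H}[\phi(V(H))]$ and suppose $R(G)\cup Z\subseteq V(A)$. Let $S\subseteq V(B)\setminus V(A)$ be such that the $4\delta$-minor folio of $B\setminus S$ relative to $V(A)\cap V(B)$ is generic. Then $H$ belongs to the $\delta$-folio of $G\setminus S$.
   Context: A separation of $G$ is a pair $(A,B)$ of subgraphs with $G=A\cup B$, $E(A)\cap E(B)=\emptyset$. A rooted graph has roots $R(G)\subseteq V(G)$ with injective labels $\rho_G$. A rooted $H$ is a topological minor of rooted $G$ if there are injective $\phi:V(H)\to V(G)$ and $\varphi$ from $E(H)$ to paths of $G$ with endpoints $\phi(u),\phi(v)$ for $\{u,v\}$, pairwise internally vertex-disjoint, with no vertex of $\phi(V(H))$ internal to any path, and $\rho_G(\phi(v))=\rho_H(v)$ for $v\in R(H)$; the subgraph formed by $\phi(V(H))$ and these paths is a realization. The $\delta$-folio is the set of rooted topological minors $H$ with $|E(H)|+\mathrm{is}(H)\le\delta$ ($\mathrm{is}$ = number of isolated vertices). A rooted graph $H$ is a (rooted) minor of rooted $G$ if there is $\psi:V(H)\to2^{V(G)}$ with pairwise disjoint sets inducing connected subgraphs, an edge of $G$ between $\psi(h),\psi(h')$ for each $\{h,h'\}\in E(H)$, and for each $u\in R(H)$ the root of $G$ with label $\rho_H(u)$ lying in $\psi(u)$. $H$ has detail $\le\delta'$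 if $|E(H)|\le\delta'$ and $|V(H)\setminus R(H)|\le\delta'$. The $\delta'$-minor folio of a graph $B'$ relative to $Q\subseteq V(B')$ (i.e. with $Q$ as root set, labelled injectively) is generic if it contains every rooted graph with root set labelled by the labels of $Q$ and detail $\le\delta'$. *)

theory Defs
  imports Main
begin

record 'a graph =
  verts :: "'a set"
  edges :: "'a set set"

definition graph :: "'a graph \<Rightarrow> bool" where
  "graph G \<longleftrightarrow> finite (verts G) \<and> (\<forall>e\<in>edges G. e \<subseteq> verts G \<and> card e = 2)"

definition rooted :: "'a set \<Rightarrow> ('a \<Rightarrow> 'l) \<Rightarrow> 'a graph \<Rightarrow> bool" where
  "rooted R \<rho> G \<longleftrightarrow> graph G \<and> R \<subseteq> verts G \<and> inj_on \<rho> R"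

definition subgraph :: "'a graph \<Rightarrow> 'a graph \<Rightarrow> bool" where
  "subgraph H G \<longleftrightarrow> graph H \<and> verts H \<subseteq> verts G \<and> edges H \<subseteq> edges G"

definition separation :: "'a graph \<Rightarrow> 'a graph \<Rightarrow> 'a graph \<Rightarrow> bool" where
  "separation G A B \<longleftrightarrow> subgraph A G \<and> subgraph B G \<and>
     verts A \<union> verts B = verts G \<and> edges A \<union> edges B = edges G \<and> edges A \<inter> edges B = {}"

definition delete :: "'a graph \<Rightarrow> 'a set \<Rightarrow> 'a graph" where
  "delete G S = \<lparr>verts = verts G - S, edges = {e \<in> edges G. e \<inter> S = {}}\<rparr>"

definition isolated :: "'a graph \<Rightarrow> 'a set" where
  "isolated G = {v \<in> verts G. \<forall>e\<in>edges G. v \<notin> e}"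

definition closed_nbhd :: "'a graph \<Rightarrow> 'a set \<Rightarrow> 'a set" where
  "closed_nbhd G X = X \<union> {v \<in> verts G. \<exists>x\<in>X. {x, v} \<in> edges G}"

definition is_path :: "'a graph \<Rightarrow> 'a list \<Rightarrow> bool" where
  "is_path G P \<longleftrightarrow> P \<noteq> [] \<and> distinct P \<and> set P \<subseteq> verts G \<and>
     (\<forall>i. Suc i < length P \<longrightarrow> {P ! i, P ! Suc i} \<in> edges G)"

definition internal :: "'a list \<Rightarrow> 'a set" where
  "internal P = set P - {hd P, last P}"

definition path_edges :: "'a list \<Rightarrow> 'a set set" where
  "path_edges P = {{P ! i, P ! Suc i} | i. Suc i < length P}"

definition tm_model :: "'b graph \<Rightarrow> 'b set \<Rightarrow> ('b \<Rightarrow> 'l) \<Rightarrow> 'a graph \<Rightarrow> 'a set \<Rightarrow> ('a \<Rightarrow> 'l)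
    \<Rightarrow> ('b \<Rightarrow> 'a) \<Rightarrow> ('b set \<Rightarrow> 'a list) \<Rightarrow> bool" where
  "tm_model H RH \<rho>H G RG \<rho>G \<phi> \<Phi> \<longleftrightarrow>
     inj_on \<phi> (verts H) \<and> \<phi> ` verts H \<subseteq> verts G \<and>
     (\<forall>e\<in>edges H. is_path G (\<Phi> e) \<and>
        (\<exists>u v. e = {u, v} \<and> hd (\<Phi> e) = \<phi> u \<and> last (\<Phi> e) = \<phi> v)) \<and>
     (\<forall>e\<in>edges H. \<forall>e'\<in>edges H. e \<noteq> e' \<longrightarrow> internal (\<Phi> e) \<inter> internal (\<Phi> e') = {}) \<and>
     (\<forall>e\<in>edges H. internal (\<Phi> e) \<inter> \<phi> ` verts H = {}) \<and>
     (\<forall>v\<in>RH. \<phi> v \<in> RG \<and> \<rho>G (\<phi> v) = \<rho>H v)"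

definition top_minor :: "'b graph \<Rightarrow> 'b set \<Rightarrow> ('b \<Rightarrow> 'l) \<Rightarrow> 'a graph \<Rightarrow> 'a set \<Rightarrow> ('a \<Rightarrow> 'l) \<Rightarrow> bool" where
  "top_minor H RH \<rho>H G RG \<rho>G \<longleftrightarrow> rooted RH \<rho>H H \<and> (\<exists>\<phi> \<Phi>. tm_model H RH \<rho>H G RG \<rho>G \<phi> \<Phi>)"

definition in_folio :: "nat \<Rightarrow> 'b graph \<Rightarrow> 'b set \<Rightarrow> ('b \<Rightarrow> 'l) \<Rightarrow> 'a graph \<Rightarrow> 'a set \<Rightarrow> ('a \<Rightarrow> 'l) \<Rightarrow> bool" where
  "in_folio \<delta> H RH \<rho>H G RG \<rho>G \<longleftrightarrow>
     top_minor H RH \<rho>H G RG \<rho>G \<and> card (edges H) + card (isolated H) \<le> \<delta>"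

definition realization :: "'b graph \<Rightarrow> ('b \<Rightarrow> 'a) \<Rightarrow> ('b set \<Rightarrow> 'a list) \<Rightarrow> 'a graph" where
  "realization H \<phi> \<Phi> = \<lparr>verts = \<phi> ` verts H \<union> (\<Union>e\<in>edges H. set (\<Phi> e)),
                         edges = (\<Union>e\<in>edges H. path_edges (\<Phi> e))\<rparr>"

definition connected_in :: "'a graph \<Rightarrow> 'a set \<Rightarrow> bool" where
  "connected_in G X \<longleftrightarrow>
     (\<forall>x\<in>X. \<forall>y\<in>X. (\<lambda>a b. a \<in> X \<and> b \<in> X \<and> {a, b} \<in> edges G)\<^sup>*\<^sup>* x y)"

definition rooted_minor :: "'b graph \<Rightarrow> 'b set \<Rightarrow> ('b \<Rightarrow> 'l) \<Rightarrow> 'a graph \<Rightarrow> 'a set \<Rightarrow> ('a \<Rightarrow> 'l) \<Rightarrow> bool" where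
  "rooted_minor H RH \<rho>H G RG \<rho>G \<longleftrightarrow> rooted RH \<rho>H H \<and>
     (\<exists>\<psi> :: 'b \<Rightarrow> 'a set.
        (\<forall>h\<in>verts H. \<psi> h \<noteq> {} \<and> \<psi> h \<subseteq> verts G \<and> connected_in G (\<psi> h)) \<and>
        (\<forall>h\<in>verts H. \<forall>h'\<in>verts H. h \<noteq> h' \<longrightarrow> \<psi> h \<inter> \<psi> h' = {}) \<and>
        (\<forall>e\<in>edges H. \<exists>h h'. e = {h, h'} \<and> (\<exists>x\<in>\<psi> h. \<exists>y\<in>\<psi> h'. {x, y} \<in> edges G)) \<and>
        (\<forall>u\<in>RH. \<exists>r\<in>RG. \<rho>G r = \<rho>H u \<and> r \<in> \<psi> u))"

definition detail_le :: "nat \<Rightarrow> 'b graph \<Rightarrow> 'b set \<Rightarrow> bool" where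
  "detail_le d H RH \<longleftrightarrow> card (edges H) \<le> d \<and> card (verts H - RH) \<le> d"

text \<open>The d-minor folio of B' relative to Q (Q labelled injectively by the identity, i.e.
  each vertex of Q is its own label) is generic: it contains every rooted graph of detail
  at most d whose root set is labelled (bijectively) by the labels of Q.  Rooted graphs are
  taken up to isomorphism, represented with vertices in nat.\<close>
definition generic_minor_folio :: "nat \<Rightarrow> 'a graph \<Rightarrow> 'a set \<Rightarrow> bool" where
  "generic_minor_folio d B' Q \<longleftrightarrow>
     (\<forall>(H :: nat graph) RH (\<rho>H :: nat \<Rightarrow> 'a).
        rooted RH \<rho>H H \<and> \<rho>H ` RH = Q \<and> detail_le d H RH \<longrightarrow>
        rooted_minor H RH \<rho>H B' Q id)"

end

theory Submission
  imports Defs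
begin

text \<open>A path of the realization that leaves V(A) crosses the separation: the vertex q1 before
  its first exit from V(A) and the vertex q2 after its last re-entry lie in V(A) \<inter> V(B), and
  they are internal vertices of the path because the neighbours of the branch vertices on
  the realization lie in Z \<subseteq> V(A). The pairs {q1, q2} span a rooted graph on V(A) \<inter> V(B) with
  at most \<delta> edges, so the generic minor folio of B \<setminus> S yields disjoint connected branch sets
  around the vertices of V(A) \<inter> V(B), adjacent along each pair. Inside two adjacent branch sets
  there is a q1-q2 path of B \<setminus> S whose inner vertices avoid V(A); splicing it in place of the
  segment between q1 and q2 gives paths of G \<setminus> S, and these stay internally disjoint because
  the new inner vertices lie in branch sets of distinct roots.\<close>

lemma is_path_iff_successively:
  "is_path G P \<longleftrightarrow>
     P \<noteq> [] \<and> distinct P \<and> set P \<subseteq> verts G \<and> successively (\<lambda>a b. {a, b} \<in> edges G) P"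
  by (simp add: is_path_def successively_conv_nth)

lemma is_path_append:
  assumes "xs \<noteq> []" "ys \<noteq> []"
  shows "is_path G (xs @ ys) \<longleftrightarrow>
    is_path G xs \<and> is_path G ys \<and> set xs \<inter> set ys = {} \<and> {last xs, hd ys} \<in> edges G"
  using assms by (auto simp: is_path_iff_successively successively_append_iff)

lemma is_path_glue:
  assumes "is_path G (xs @ [a])" "is_path G (a # ys)" "set xs \<inter> set ys = {}"
  shows "is_path G (xs @ a # ys)"
proof (cases "ys = []")
  case False
  then have "is_path G ys" "a \<notin> set ys" "{a, hd ys} \<in> edges G"
    using assms(2) is_path_append[of "[a]" ys G] by auto
  then show ?thesis
    using assms False is_path_append[of "xs @ [a]" ys G] by auto
qed (use assms in simp)

lemma is_path_mono:
  assumes "is_path G P" "verts G \<subseteq> verts G'" "edges G \<subseteq> edges G'"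
  shows "is_path G' P"
  using assms unfolding is_path_def by blast

lemma is_path_delete:
  assumes "is_path G P" "set P \<inter> S = {}"
  shows "is_path (delete G S) P"
proof -
  have "{P ! i, P ! Suc i} \<inter> S = {}" if "Suc i < length P" for i
  proof -
    have "P ! i \<in> set P" "P ! Suc i \<in> set P" using that by simp_all
    then show ?thesis using assms(2) by blast
  qed
  then show ?thesis
    using assms unfolding is_path_def delete_def by auto
qed

lemma path_edges_append:
  assumes "xs \<noteq> []" "ys \<noteq> []"
  shows "{last xs, hd ys} \<in> path_edges (xs @ ys)"
proof -
  let ?i = "length xs - 1"
  have "(xs @ ys) ! ?i = last xs" "(xs @ ys) ! Suc ?i = hd ys" "Suc ?i < length (xs @ ys)"
    using assms by (simp_all add: nth_append last_conv_nth hd_conv_nth)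
  then show ?thesis
    unfolding path_edges_def by (intro CollectI exI[of _ ?i]) simp
qed

lemma path_edges_subset: "is_path G P \<Longrightarrow> path_edges P \<subseteq> edges G"
  by (auto simp: is_path_def path_edges_def)

lemma mem_path_edges_imp_mem: "{x, w} \<in> path_edges P \<Longrightarrow> w \<in> set P"
  by (auto simp: path_edges_def doubleton_eq_iff)

lemma walk_imp_path:
  assumes "(\<lambda>a b. a \<in> X \<and> b \<in> X \<and> {a, b} \<in> edges G)\<^sup>*\<^sup>* x y" "x \<in> X" "X \<subseteq> verts G"
  shows "\<exists>P. is_path G P \<and> hd P = x \<and> last P = y \<and> set P \<subseteq> X"
  using assms(1)
proof (induction rule: rtranclp_induct)
  case base
  then show ?case using assms(2,3) by (intro exI[of _ "[x]"]) (auto simp: is_path_def)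
next
  case (step y z)
  then obtain P where P: "is_path G P" "hd P = x" "last P = y" "set P \<subseteq> X" by blast
  have z: "is_path G [z]" using step(2) assms(3) by (auto simp: is_path_def)
  show ?case
  proof (cases "z \<in> set P")
    case True
    then obtain xs ys where P_split: "P = (xs @ [z]) @ ys" by (auto dest: split_list)
    then have "is_path G (xs @ [z])"
      using P(1) is_path_append[of "xs @ [z]" ys G] by (cases "ys = []") auto
    then show ?thesis using P P_split by (intro exI[of _ "xs @ [z]"]) (cases xs, auto)
  next
    case False
    have "P \<noteq> []" using P(1) by (simp add: is_path_def)
    then have "is_path G (P @ [z])"
      using P z False step(2) is_path_append[of P "[z]" G] by auto
    then show ?thesis using P \<open>P \<noteq> []\<close> step(2) by (intro exI[of _ "P @ [z]"]) auto
  qed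
qed

lemma connected_in_path:
  assumes "connected_in G X" "X \<subseteq> verts G" "x \<in> X" "y \<in> X"
  obtains P where "is_path G P" "hd P = x" "last P = y" "set P \<subseteq> X"
  using walk_imp_path[OF assms(1)[unfolded connected_in_def, rule_format, OF assms(3,4)] assms(3,2)]
    that by blast

lemma graph_finite_edges: "graph G \<Longrightarrow> finite (edges G)"
  unfolding graph_def by (auto intro: finite_subset[of _ "Pow (verts G)"])

lemma split_first_last_outside:
  assumes "x \<in> set P" "x \<notin> V"
  obtains pre mid suf where "P = pre @ mid @ suf" "set pre \<subseteq> V" "set suf \<subseteq> V"
    "mid \<noteq> []" "hd mid \<notin> V" "last mid \<notin> V"
proof -
  obtain pre a rest where P: "P = pre @ a # rest" "a \<notin> V" "\<forall>y\<in>set pre. \<not> y \<notin> V"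
    by (rule split_list_first_propE[of P "\<lambda>v. v \<notin> V"]) (use assms in blast)
  obtain m b suf where rest: "a # rest = m @ b # suf" "b \<notin> V" "\<forall>y\<in>set suf. \<not> y \<notin> V"
    by (rule split_list_last_propE[of "a # rest" "\<lambda>v. v \<notin> V"]) (use P(2) in simp)
  have "hd (m @ [b]) \<notin> V" using rest(1,2) P(2) by (cases m) auto
  then show ?thesis
    using that[of pre "m @ [b]" suf] P rest by auto
qed

lemma separation_edge_leaving_A:
  assumes "separation G A B" "{x, y} \<in> edges G" "y \<notin> verts A"
  shows "x \<in> verts B"
proof -
  have "{x, y} \<notin> edges A"
    using assms(1,3) by (auto simp: separation_def subgraph_def graph_def)
  then have "{x, y} \<in> edges B"
    using assms(1,2) by (auto simp: separation_def)
  then show ?thesis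
    using assms(1) by (auto simp: separation_def subgraph_def graph_def)
qed

lemma crossing_path_split:
  assumes sep: "separation G A B" and path: "is_path G P" and leaves: "\<not> set P \<subseteq> verts A"
    and ends: "hd P \<in> verts A" "last P \<in> verts A"
    and end_nbrs: "{w. \<exists>x\<in>{hd P, last P}. {x, w} \<in> path_edges P} \<subseteq> verts A"
  obtains pre q1 mid q2 suf where "P = pre @ q1 # mid @ q2 # suf" "pre \<noteq> []" "suf \<noteq> []"
    "set pre \<subseteq> verts A" "set suf \<subseteq> verts A" "q1 \<in> verts A \<inter> verts B" "q2 \<in> verts A \<inter> verts B"
proof -
  obtain x where "x \<in> set P" "x \<notin> verts A" using leaves by blast
  then obtain pre0 mid suf0 where P: "P = pre0 @ mid @ suf0" "set pre0 \<subseteq> verts A"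
    "set suf0 \<subseteq> verts A" "mid \<noteq> []" "hd mid \<notin> verts A" "last mid \<notin> verts A"
    by (rule split_first_last_outside)
  have "pre0 \<noteq> []" using P ends(1) by auto
  then obtain pre q1 where pre0: "pre0 = pre @ [q1]" by (metis append_butlast_last_id)
  have "suf0 \<noteq> []" using P ends(2) by auto
  then obtain q2 suf where suf0: "suf0 = q2 # suf" by (metis list.collapse)
  have P': "P = pre @ q1 # mid @ q2 # suf" using P(1) pre0 suf0 by simp
  have edge1: "{q1, hd mid} \<in> path_edges P"
    using path_edges_append[of "pre @ [q1]" "mid @ q2 # suf"] P' P(4) by simp
  have edge2: "{q2, last mid} \<in> path_edges P"
    using path_edges_append[of "pre @ q1 # mid" "q2 # suf"] P' P(4) by (simp add: insert_commute)
  have "pre \<noteq> []"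
  proof
    assume "pre = []"
    then have "hd P = q1" using P' by simp
    then show False using end_nbrs edge1 P(5) by blast
  qed
  moreover have "suf \<noteq> []"
  proof
    assume "suf = []"
    then have "last P = q2" using P' by simp
    then show False using end_nbrs edge2 P(6) by blast
  qed
  moreover have "q1 \<in> verts B" "q2 \<in> verts B"
    using edge1 edge2 path_edges_subset[OF path] P(5,6) separation_edge_leaving_A[OF sep] by blast+
  ultimately show ?thesis
    using that[OF P'] P(2,3) pre0 suf0 by simp
qed

lemma is_path_splice:
  assumes path: "is_path G (pre @ q1 # mid @ q2 # suf)"
    and route: "is_path (delete G S) (q1 # M @ [q2])"
    and avoid_S: "set (pre @ q1 # q2 # suf) \<inter> S = {}"
    and avoid_M: "set M \<inter> set (pre @ suf) = {}"
  shows "is_path (delete G S) (pre @ q1 # M @ q2 # suf)"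
proof -
  have "is_path G (pre @ [q1])"
    using path is_path_append[of "pre @ [q1]" "mid @ q2 # suf" G] by simp
  then have pre: "is_path (delete G S) (pre @ [q1])"
    using avoid_S by (intro is_path_delete) auto
  have "is_path G (q2 # suf)"
    using path is_path_append[of "pre @ q1 # mid" "q2 # suf" G] by simp
  then have suf: "is_path (delete G S) (q2 # suf)"
    using avoid_S by (intro is_path_delete) auto
  have dist: "distinct (pre @ q1 # mid @ q2 # suf)"
    using path by (simp add: is_path_def)
  have "is_path (delete G S) ((q1 # M) @ q2 # suf)"
    using is_path_glue[of _ "q1 # M" q2 suf] route suf dist avoid_M by auto
  moreover have "set pre \<inter> set (M @ q2 # suf) = {}"
    using dist avoid_M by auto
  ultimately show ?thesis
    using is_path_glue[OF pre] by simp
qed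

definition spliceable :: "'a graph \<Rightarrow> 'a set \<Rightarrow> 'a list \<Rightarrow> 'a \<Rightarrow> 'a \<Rightarrow> bool" where
  "spliceable G X P q1 q2 \<longleftrightarrow> q1 \<in> internal P \<and> q2 \<in> internal P \<and> q1 \<noteq> q2 \<and>
     (\<forall>M. is_path G (q1 # M @ [q2]) \<longrightarrow> set M \<inter> X = {} \<longrightarrow>
       (\<exists>P'. is_path G P' \<and> hd P' = hd P \<and> last P' = last P \<and>
          internal P' \<subseteq> (internal P \<inter> X) \<union> set M))"

lemma crossing_path_spliceable:
  assumes sep: "separation G A B" and path: "is_path G P" and leaves: "\<not> set P \<subseteq> verts A"
    and ends: "hd P \<in> verts A" "last P \<in> verts A"
    and end_nbrs: "{w. \<exists>x\<in>{hd P, last P}. {x, w} \<in> path_edges P} \<subseteq> verts A"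
    and S: "S \<inter> verts A = {}"
  obtains q1 q2 where "spliceable (delete G S) (verts A) P q1 q2"
    "q1 \<in> verts A \<inter> verts B" "q2 \<in> verts A \<inter> verts B"
proof -
  obtain pre q1 mid q2 suf where P: "P = pre @ q1 # mid @ q2 # suf" "pre \<noteq> []" "suf \<noteq> []"
    "set pre \<subseteq> verts A" "set suf \<subseteq> verts A" "q1 \<in> verts A \<inter> verts B" "q2 \<in> verts A \<inter> verts B"
    using crossing_path_split[OF sep path leaves ends end_nbrs] by blast
  have dist: "distinct P" using path by (simp add: is_path_def)
  have "hd P \<in> set pre" "last P \<in> set suf" using P(1-3) by simp_all
  then have internal: "q1 \<in> internal P" "q2 \<in> internal P" "q1 \<noteq> q2"
    using dist unfolding P(1) internal_def by auto
  have "\<exists>P'. is_path (delete G S) P' \<and> hd P' = hd P \<and> last P' = last P \<and>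
      internal P' \<subseteq> (internal P \<inter> verts A) \<union> set M"
    if route: "is_path (delete G S) (q1 # M @ [q2])" and M: "set M \<inter> verts A = {}" for M
  proof (intro exI conjI)
    let ?P' = "pre @ q1 # M @ q2 # suf"
    show "is_path (delete G S) ?P'"
      using is_path_splice[OF path[unfolded P(1)] route] P(4-7) S M by auto
    show ends': "hd ?P' = hd P" "last ?P' = last P" using P(1-3) by simp_all
    have "set ?P' \<subseteq> (set P \<inter> verts A) \<union> set M" using P(1,4-7) by auto
    then show "internal ?P' \<subseteq> (internal P \<inter> verts A) \<union> set M"
      unfolding internal_def ends' by blast
  qed
  then show ?thesis using that P(6,7) internal unfolding spliceable_def by blast
qed

lemma realization_path_ends:
  assumes tm: "tm_model H RH \<rho>H G RG \<rho>G \<phi> \<Phi>" and "graph H" and e: "e \<in> edges H"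
    and nbhd: "closed_nbhd (realization H \<phi> \<Phi>) (\<phi> ` verts H) \<subseteq> V"
  shows "hd (\<Phi> e) \<in> V" "last (\<Phi> e) \<in> V"
    "{w. \<exists>x\<in>{hd (\<Phi> e), last (\<Phi> e)}. {x, w} \<in> path_edges (\<Phi> e)} \<subseteq> V"
proof -
  obtain u v where "e = {u, v}" "hd (\<Phi> e) = \<phi> u" "last (\<Phi> e) = \<phi> v"
    using tm e by (auto simp: tm_model_def)
  moreover have "e \<subseteq> verts H" using \<open>graph H\<close> e by (simp add: graph_def)
  ultimately have ends: "{hd (\<Phi> e), last (\<Phi> e)} \<subseteq> \<phi> ` verts H" by auto
  then show "hd (\<Phi> e) \<in> V" "last (\<Phi> e) \<in> V"
    using nbhd by (auto simp: closed_nbhd_def)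
  show "{w. \<exists>x\<in>{hd (\<Phi> e), last (\<Phi> e)}. {x, w} \<in> path_edges (\<Phi> e)} \<subseteq> V"
  proof
    fix w assume "w \<in> {w. \<exists>x\<in>{hd (\<Phi> e), last (\<Phi> e)}. {x, w} \<in> path_edges (\<Phi> e)}"
    then obtain x where x: "x \<in> {hd (\<Phi> e), last (\<Phi> e)}" and xw: "{x, w} \<in> path_edges (\<Phi> e)"
      by blast
    have "{x, w} \<in> edges (realization H \<phi> \<Phi>)" "w \<in> verts (realization H \<phi> \<Phi>)"
      using e xw mem_path_edges_imp_mem[OF xw] by (auto simp: realization_def)
    then show "w \<in> V"
      using x ends nbhd unfolding closed_nbhd_def by blast
  qed
qed

lemma crossing_pairs:
  assumes sep: "separation G A B" and "graph H"
    and tm: "tm_model H RH \<rho>H G RG \<rho>G \<phi> \<Phi>"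
    and nbhd: "closed_nbhd (realization H \<phi> \<Phi>) (\<phi> ` verts H) \<subseteq> verts A"
    and S: "S \<inter> verts A = {}"
  obtains q1 q2 where "\<forall>e\<in>edges H. \<not> set (\<Phi> e) \<subseteq> verts A \<longrightarrow>
    spliceable (delete G S) (verts A) (\<Phi> e) (q1 e) (q2 e) \<and>
    q1 e \<in> verts A \<inter> verts B \<and> q2 e \<in> verts A \<inter> verts B"
proof -
  have "\<exists>q1 q2. spliceable (delete G S) (verts A) (\<Phi> e) q1 q2 \<and>
      q1 \<in> verts A \<inter> verts B \<and> q2 \<in> verts A \<inter> verts B"
    if e: "e \<in> edges H" "\<not> set (\<Phi> e) \<subseteq> verts A" for e
  proof -
    have "is_path G (\<Phi> e)" using tm e(1) by (simp add: tm_model_def)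
    obtain q1 q2 where "spliceable (delete G S) (verts A) (\<Phi> e) q1 q2"
      "q1 \<in> verts A \<inter> verts B" "q2 \<in> verts A \<inter> verts B"
      by (rule crossing_path_spliceable[OF sep \<open>is_path G (\<Phi> e)\<close> e(2)
            realization_path_ends[OF tm \<open>graph H\<close> e(1) nbhd] S])
    then show ?thesis by blast
  qed
  then show ?thesis using that by metis
qed

text \<open>The folio speaks about rooted graphs on \<open>nat\<close>; a graph on Q is transported along a
  bijection from \<open>{0..<card Q}\<close>. All its vertices are roots, so its detail is its edge count.\<close>

lemma generic_minor_folio_relabel:
  fixes lab :: "nat \<Rightarrow> 'a" and N :: "nat set"
  assumes generic: "generic_minor_folio d B' Q" and lab: "bij_betw lab N Q" "finite N"
    and F: "F \<subseteq> {e. e \<subseteq> Q \<and> card e = 2}" "card F \<le> d"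
  shows "rooted_minor \<lparr>verts = N, edges = (`) (inv_into N lab) ` F\<rparr> N lab B' Q id"
proof -
  let ?idx = "inv_into N lab"
  have inj: "inj_on ?idx Q" and idx_N: "?idx ` Q \<subseteq> N"
    using bij_betw_inv_into[OF lab(1)] by (auto simp: bij_betw_def)
  have "finite Q" using lab by (simp add: bij_betw_finite)
  then have "finite F" using F(1) by (auto intro: finite_subset[of F "Pow Q"])
  have "card (?idx ` e) = 2" "?idx ` e \<subseteq> N" if "e \<in> F" for e
    using that F(1) idx_N card_image[OF inj_on_subset[OF inj]] by auto
  then have "rooted N lab \<lparr>verts = N, edges = (`) ?idx ` F\<rparr>"
    using lab unfolding rooted_def graph_def by (auto simp: bij_betw_def)
  moreover have "lab ` N = Q" using lab by (simp add: bij_betw_def)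
  moreover have "detail_le d \<lparr>verts = N, edges = (`) ?idx ` F\<rparr> N"
    using card_image_le[OF \<open>finite F\<close>, of "(`) ?idx"] F(2) unfolding detail_le_def by simp
  ultimately show ?thesis
    using generic[unfolded generic_minor_folio_def, rule_format,
        where H = "\<lparr>verts = N, edges = (`) ?idx ` F\<rparr>" and RH = N and \<rho>H = lab]
    by blast
qed

lemma generic_minor_folio_branch_sets:
  fixes B' :: "'a graph" and Q :: "'a set" and F :: "'a set set"
  assumes generic: "generic_minor_folio d B' Q" and "finite Q"
    and F: "F \<subseteq> {e. e \<subseteq> Q \<and> card e = 2}" "card F \<le> d"
  obtains \<psi> :: "'a \<Rightarrow> 'a set" where
    "\<forall>q\<in>Q. q \<in> \<psi> q \<and> \<psi> q \<subseteq> verts B' \<and> connected_in B' (\<psi> q)"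
    "\<forall>q\<in>Q. \<forall>q'\<in>Q. q \<noteq> q' \<longrightarrow> \<psi> q \<inter> \<psi> q' = {}"
    "\<forall>q q'. {q, q'} \<in> F \<longrightarrow> (\<exists>x\<in>\<psi> q. \<exists>y\<in>\<psi> q'. {x, y} \<in> edges B')"
proof -
  obtain lab where lab: "bij_betw lab {0..<card Q} Q"
    using ex_bij_betw_nat_finite[OF \<open>finite Q\<close>] by blast
  define idx where "idx = inv_into {0..<card Q} lab"
  have idx: "idx q \<in> {0..<card Q}" "lab (idx q) = q" if "q \<in> Q" for q
    using that bij_betw_inv_into[OF lab] lab unfolding idx_def
    by (auto simp: bij_betw_def f_inv_into_f)
  obtain \<psi>' :: "nat \<Rightarrow> 'a set" where
    branch: "\<forall>h\<in>{0..<card Q}. \<psi>' h \<noteq> {} \<and> \<psi>' h \<subseteq> verts B' \<and> connected_in B' (\<psi>' h)"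
    and disjoint: "\<forall>h\<in>{0..<card Q}. \<forall>h'\<in>{0..<card Q}. h \<noteq> h' \<longrightarrow> \<psi>' h \<inter> \<psi>' h' = {}"
    and adjacent: "\<forall>E\<in>(`) idx ` F. \<exists>h h'. E = {h, h'} \<and> (\<exists>x\<in>\<psi>' h. \<exists>y\<in>\<psi>' h'. {x, y} \<in> edges B')"
    and roots: "\<forall>u\<in>{0..<card Q}. \<exists>r\<in>Q. id r = lab u \<and> r \<in> \<psi>' u"
    using generic_minor_folio_relabel[OF generic lab finite_atLeastLessThan F]
    unfolding rooted_minor_def graph.select_convs idx_def by (elim conjE exE)
  show ?thesis
  proof (rule that[of "\<psi>' \<circ> idx"]; intro ballI allI impI)
    show "q \<in> (\<psi>' \<circ> idx) q \<and> (\<psi>' \<circ> idx) q \<subseteq> verts B' \<and> connected_in B' ((\<psi>' \<circ> idx) q)"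
      if "q \<in> Q" for q
      using roots branch idx[OF that] by (metis comp_apply id_apply)
    show "(\<psi>' \<circ> idx) q \<inter> (\<psi>' \<circ> idx) q' = {}" if "q \<in> Q" "q' \<in> Q" "q \<noteq> q'" for q q'
      using disjoint idx[OF that(1)] idx[OF that(2)] that(3) by (metis comp_apply)
    show "\<exists>x\<in>(\<psi>' \<circ> idx) q. \<exists>y\<in>(\<psi>' \<circ> idx) q'. {x, y} \<in> edges B'" if qq': "{q, q'} \<in> F" for q q'
    proof -
      obtain h h' x y where hh': "{idx q, idx q'} = {h, h'}" and
        xy: "x \<in> \<psi>' h" "y \<in> \<psi>' h'" "{x, y} \<in> edges B'"
        using adjacent imageI[OF qq', of "(`) idx"] by auto
      from hh' consider "h = idx q" "h' = idx q'" | "h = idx q'" "h' = idx q"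
        by (auto simp: doubleton_eq_iff)
      then show ?thesis using xy by cases (auto, metis insert_commute)
    qed
  qed
qed

lemma adjacent_branch_sets_path:
  assumes branch: "\<forall>q\<in>Q. q \<in> \<psi> q \<and> \<psi> q \<subseteq> verts G \<and> connected_in G (\<psi> q)"
    and disjoint: "\<forall>q\<in>Q. \<forall>q'\<in>Q. q \<noteq> q' \<longrightarrow> \<psi> q \<inter> \<psi> q' = {}"
    and q: "q \<in> Q" "q' \<in> Q" "q \<noteq> q'"
    and adj: "x \<in> \<psi> q" "y \<in> \<psi> q'" "{x, y} \<in> edges G"
  shows "\<exists>M. is_path G (q # M @ [q']) \<and> set M \<subseteq> \<psi> q \<union> \<psi> q' \<and> set M \<inter> Q = {}"
proof -
  obtain P1 where P1: "is_path G P1" "hd P1 = q" "last P1 = x" "set P1 \<subseteq> \<psi> q"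
    using connected_in_path[of G "\<psi> q" q x] branch[rule_format, OF q(1)] adj(1) by blast
  obtain P2 where P2: "is_path G P2" "hd P2 = y" "last P2 = q'" "set P2 \<subseteq> \<psi> q'"
    using connected_in_path[of G "\<psi> q'" y q'] branch[rule_format, OF q(2)] adj(2) by blast
  have ne: "P1 \<noteq> []" "P2 \<noteq> []" using P1(1) P2(1) by (simp_all add: is_path_def)
  have "set P1 \<inter> set P2 = {}" using P1(4) P2(4) disjoint[rule_format, OF q] by blast
  then have path: "is_path G (P1 @ P2)"
    using is_path_append[OF ne] P1 P2 adj(3) by simp
  have "hd (P1 @ P2) = q" "last (P1 @ P2) = q'" using ne P1(2) P2(3) by simp_all
  moreover obtain a rest where P12: "P1 @ P2 = a # rest" using ne(1) by (cases P1) auto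
  ultimately have "rest \<noteq> []" "a = q" "last rest = q'" using q(3) by auto
  then have M: "P1 @ P2 = q # butlast rest @ [q']" (is "_ = q # ?M @ _")
    using P12 append_butlast_last_id[of rest] by simp
  have "set ?M \<subseteq> set (P1 @ P2)" unfolding M by auto
  then have "set ?M \<subseteq> \<psi> q \<union> \<psi> q'" using P1(4) P2(4) by auto
  moreover have "m \<notin> Q" if m: "m \<in> set ?M" for m
  proof
    assume "m \<in> Q"
    have "m \<noteq> q" "m \<noteq> q'" using path m unfolding M by (auto simp: is_path_def)
    then show False
      using disjoint \<open>m \<in> Q\<close> q(1,2) branch m \<open>set ?M \<subseteq> \<psi> q \<union> \<psi> q'\<close> by blast
  qed
  ultimately show ?thesis using path M by auto
qed

lemma spliceable_reroute:
  assumes splice: "spliceable G' X P q1 q2" and q: "q1 \<in> Q" "q2 \<in> Q"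
    and branch: "\<forall>q\<in>Q. q \<in> \<psi> q \<and> \<psi> q \<subseteq> verts B' \<and> connected_in B' (\<psi> q)"
    and disjoint: "\<forall>q\<in>Q. \<forall>q'\<in>Q. q \<noteq> q' \<longrightarrow> \<psi> q \<inter> \<psi> q' = {}"
    and adj: "\<exists>x\<in>\<psi> q1. \<exists>y\<in>\<psi> q2. {x, y} \<in> edges B'"
    and B': "verts B' \<subseteq> verts G'" "edges B' \<subseteq> edges G'" "verts B' \<inter> X \<subseteq> Q"
  shows "\<exists>P'. is_path G' P' \<and> hd P' = hd P \<and> last P' = last P \<and>
    internal P' \<subseteq> (internal P \<inter> X) \<union> (\<Union>q \<in> internal P \<inter> Q. \<psi> q - X)"
proof -
  have int: "q1 \<in> internal P" "q2 \<in> internal P" "q1 \<noteq> q2"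
    using splice by (simp_all add: spliceable_def)
  obtain M where M: "is_path B' (q1 # M @ [q2])" "set M \<subseteq> \<psi> q1 \<union> \<psi> q2" "set M \<inter> Q = {}"
    using adjacent_branch_sets_path[OF branch disjoint q int(3)] adj by blast
  have "set M \<subseteq> verts B'" using M(1) by (auto simp: is_path_def)
  then have M_X: "set M \<inter> X = {}" using M(3) B'(3) by blast
  obtain P' where "is_path G' P'" "hd P' = hd P" "last P' = last P"
    "internal P' \<subseteq> (internal P \<inter> X) \<union> set M"
    using splice is_path_mono[OF M(1) B'(1,2)] M_X unfolding spliceable_def by blast
  moreover have "set M \<subseteq> (\<Union>q \<in> internal P \<inter> Q. \<psi> q - X)" using M(2) M_X int q by blast
  ultimately show ?thesis by blast
qed

lemma branch_sets_reroute_disjoint: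
  assumes "I1 \<inter> I2 = {}"
    and J1: "J1 \<subseteq> (I1 \<inter> X) \<union> (\<Union>q \<in> I1 \<inter> Q. \<psi> q - X)"
    and J2: "J2 \<subseteq> (I2 \<inter> X) \<union> (\<Union>q \<in> I2 \<inter> Q. \<psi> q - X)"
    and disjoint: "\<forall>q\<in>Q. \<forall>q'\<in>Q. q \<noteq> q' \<longrightarrow> \<psi> q \<inter> \<psi> q' = {}"
  shows "J1 \<inter> J2 = {}"
proof (rule ccontr)
  assume "J1 \<inter> J2 \<noteq> {}"
  then obtain x where x: "x \<in> J1" "x \<in> J2" by blast
  show False
  proof (cases "x \<in> X")
    case True
    then show False using x J1 J2 assms(1) by blast
  next
    case False
    then obtain q q' where q: "q \<in> I1 \<inter> Q" "q' \<in> I2 \<inter> Q" and "x \<in> \<psi> q" "x \<in> \<psi> q'"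
      using x J1 J2 by blast
    moreover have "q \<noteq> q'" using q assms(1) by blast
    ultimately show False using disjoint by blast
  qed
qed

lemma tm_model_reroute:
  assumes tm: "tm_model H RH \<rho>H G RG \<rho>G \<phi> \<Phi>"
    and branch_verts: "\<phi> ` verts H \<subseteq> X \<inter> verts G'"
    and roots: "\<And>v. v \<in> RH \<Longrightarrow> \<phi> v \<in> RG'"
    and disjoint: "\<forall>q\<in>Q. \<forall>q'\<in>Q. q \<noteq> q' \<longrightarrow> \<psi> q \<inter> \<psi> q' = {}"
    and reroute: "\<And>e. e \<in> edges H \<Longrightarrow> \<exists>P'. is_path G' P' \<and> hd P' = hd (\<Phi> e) \<and>
      last P' = last (\<Phi> e) \<and> internal P' \<subseteq> (internal (\<Phi> e) \<inter> X) \<union> (\<Union>q \<in> internal (\<Phi> e) \<inter> Q. \<psi> q - X)"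
  shows "\<exists>\<Phi>'. tm_model H RH \<rho>H G' RG' \<rho>G \<phi> \<Phi>'"
proof -
  obtain \<Phi>' where paths: "\<And>e. e \<in> edges H \<Longrightarrow>
      is_path G' (\<Phi>' e) \<and> hd (\<Phi>' e) = hd (\<Phi> e) \<and> last (\<Phi>' e) = last (\<Phi> e)"
    and internal: "\<And>e. e \<in> edges H \<Longrightarrow>
      internal (\<Phi>' e) \<subseteq> (internal (\<Phi> e) \<inter> X) \<union> (\<Union>q \<in> internal (\<Phi> e) \<inter> Q. \<psi> q - X)"
    using reroute by metis
  have "tm_model H RH \<rho>H G' RG' \<rho>G \<phi> \<Phi>'"
    unfolding tm_model_def
  proof (intro conjI ballI impI)
    show "inj_on \<phi> (verts H)" "\<phi> ` verts H \<subseteq> verts G'"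
      using tm branch_verts by (auto simp: tm_model_def)
  next
    fix e assume e: "e \<in> edges H"
    show "is_path G' (\<Phi>' e)" using paths[OF e] by blast
    show "\<exists>u v. e = {u, v} \<and> hd (\<Phi>' e) = \<phi> u \<and> last (\<Phi>' e) = \<phi> v"
      using tm e paths[OF e] by (auto simp: tm_model_def)
    have "internal (\<Phi> e) \<inter> \<phi> ` verts H = {}"
      using tm e by (simp add: tm_model_def)
    then show "internal (\<Phi>' e) \<inter> \<phi> ` verts H = {}"
      using internal[OF e] branch_verts by blast
  next
    fix e e' assume e: "e \<in> edges H" and e': "e' \<in> edges H" and "e \<noteq> e'"
    then have "internal (\<Phi> e) \<inter> internal (\<Phi> e') = {}"
      using tm by (auto simp: tm_model_def)
    then show "internal (\<Phi>' e) \<inter> internal (\<Phi>' e') = {}"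
      by (rule branch_sets_reroute_disjoint[OF _ internal[OF e] internal[OF e'] disjoint])
  next
    fix v assume "v \<in> RH"
    then show "\<phi> v \<in> RG'" "\<rho>G (\<phi> v) = \<rho>H v"
      using tm roots by (auto simp: tm_model_def)
  qed
  then show ?thesis by blast
qed

lemma crossing_pairs_linkage:
  assumes "graph G" and sep: "separation G A B" and "graph H"
    and tm: "tm_model H RH \<rho>H G RG \<rho>G \<phi> \<Phi>"
    and small: "card (edges H) \<le> d"
    and nbhd: "closed_nbhd (realization H \<phi> \<Phi>) (\<phi> ` verts H) \<subseteq> verts A"
    and S: "S \<inter> verts A = {}"
    and generic: "generic_minor_folio d (delete B S) (verts A \<inter> verts B)"
  obtains q1 q2 \<psi> where "\<forall>e\<in>edges H. \<not> set (\<Phi> e) \<subseteq> verts A \<longrightarrow>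
      spliceable (delete G S) (verts A) (\<Phi> e) (q1 e) (q2 e) \<and>
      q1 e \<in> verts A \<inter> verts B \<and> q2 e \<in> verts A \<inter> verts B \<and>
      (\<exists>x\<in>\<psi> (q1 e). \<exists>y\<in>\<psi> (q2 e). {x, y} \<in> edges (delete B S))"
    "\<forall>q\<in>verts A \<inter> verts B. q \<in> \<psi> q \<and> \<psi> q \<subseteq> verts (delete B S) \<and> connected_in (delete B S) (\<psi> q)"
    "\<forall>q\<in>verts A \<inter> verts B. \<forall>q'\<in>verts A \<inter> verts B. q \<noteq> q' \<longrightarrow> \<psi> q \<inter> \<psi> q' = {}"
proof -
  let ?Q = "verts A \<inter> verts B"
  obtain q1 q2 where cross: "\<forall>e\<in>edges H. \<not> set (\<Phi> e) \<subseteq> verts A \<longrightarrow>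
      spliceable (delete G S) (verts A) (\<Phi> e) (q1 e) (q2 e) \<and> q1 e \<in> ?Q \<and> q2 e \<in> ?Q"
    by (rule crossing_pairs[OF sep \<open>graph H\<close> tm nbhd S])
  define CE where "CE = {e \<in> edges H. \<not> set (\<Phi> e) \<subseteq> verts A}"
  have "finite ?Q" using \<open>graph G\<close> sep by (auto simp: graph_def separation_def intro: finite_subset)
  moreover have "(\<lambda>e. {q1 e, q2 e}) ` CE \<subseteq> {e. e \<subseteq> ?Q \<and> card e = 2}"
    using cross by (auto simp: CE_def spliceable_def)
  moreover have "CE \<subseteq> edges H" by (auto simp: CE_def)
  then have "card ((\<lambda>e. {q1 e, q2 e}) ` CE) \<le> d"
    using graph_finite_edges[OF \<open>graph H\<close>] card_image_le[OF finite_subset] card_mono small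
    by (metis le_trans)
  ultimately obtain \<psi> where branch:
    "\<forall>q\<in>?Q. q \<in> \<psi> q \<and> \<psi> q \<subseteq> verts (delete B S) \<and> connected_in (delete B S) (\<psi> q)"
    and disjoint: "\<forall>q\<in>?Q. \<forall>q'\<in>?Q. q \<noteq> q' \<longrightarrow> \<psi> q \<inter> \<psi> q' = {}"
    and adjacent: "\<forall>q q'. {q, q'} \<in> (\<lambda>e. {q1 e, q2 e}) ` CE \<longrightarrow>
      (\<exists>x\<in>\<psi> q. \<exists>y\<in>\<psi> q'. {x, y} \<in> edges (delete B S))"
    by (rule generic_minor_folio_branch_sets[OF generic])
  have "\<exists>x\<in>\<psi> (q1 e). \<exists>y\<in>\<psi> (q2 e). {x, y} \<in> edges (delete B S)"
    if "e \<in> edges H" "\<not> set (\<Phi> e) \<subseteq> verts A" for e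
    using adjacent[rule_format, of "q1 e" "q2 e"] that unfolding CE_def by blast
  then show ?thesis
    by (intro that[of q1 q2, OF _ branch disjoint]) (use cross in blast)
qed

lemma tm_model_avoiding_separator:
  assumes "graph G" and sep: "separation G A B" and "graph H"
    and tm: "tm_model H RH \<rho>H G RG \<rho>G \<phi> \<Phi>"
    and small: "card (edges H) \<le> d"
    and nbhd: "closed_nbhd (realization H \<phi> \<Phi>) (\<phi> ` verts H) \<subseteq> verts A"
    and roots: "RG \<subseteq> verts A"
    and S: "S \<subseteq> verts B - verts A"
    and generic: "generic_minor_folio d (delete B S) (verts A \<inter> verts B)"
  shows "\<exists>\<Phi>'. tm_model H RH \<rho>H (delete G S) (RG - S) \<rho>G \<phi> \<Phi>'"
proof -
  let ?Q = "verts A \<inter> verts B" and ?G' = "delete G S"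
  have S_A: "S \<inter> verts A = {}" using S by blast
  obtain q1 q2 \<psi> where cross: "\<forall>e\<in>edges H. \<not> set (\<Phi> e) \<subseteq> verts A \<longrightarrow>
      spliceable ?G' (verts A) (\<Phi> e) (q1 e) (q2 e) \<and> q1 e \<in> ?Q \<and> q2 e \<in> ?Q \<and>
      (\<exists>x\<in>\<psi> (q1 e). \<exists>y\<in>\<psi> (q2 e). {x, y} \<in> edges (delete B S))"
    and branch: "\<forall>q\<in>?Q. q \<in> \<psi> q \<and> \<psi> q \<subseteq> verts (delete B S) \<and> connected_in (delete B S) (\<psi> q)"
    and disjoint: "\<forall>q\<in>?Q. \<forall>q'\<in>?Q. q \<noteq> q' \<longrightarrow> \<psi> q \<inter> \<psi> q' = {}"
    by (rule crossing_pairs_linkage[OF \<open>graph G\<close> sep \<open>graph H\<close> tm small nbhd S_A generic])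
  have B'_G': "verts (delete B S) \<subseteq> verts ?G'" "edges (delete B S) \<subseteq> edges ?G'"
    "verts (delete B S) \<inter> verts A \<subseteq> ?Q"
    using sep by (auto simp: separation_def subgraph_def delete_def)
  show ?thesis
  proof (rule tm_model_reroute[OF tm _ _ disjoint])
    show "\<phi> ` verts H \<subseteq> verts A \<inter> verts ?G'"
      using tm nbhd S_A by (auto simp: tm_model_def closed_nbhd_def delete_def)
    show "\<phi> v \<in> RG - S" if "v \<in> RH" for v
      using tm that roots S_A by (auto simp: tm_model_def)
    show "\<exists>P'. is_path ?G' P' \<and> hd P' = hd (\<Phi> e) \<and> last P' = last (\<Phi> e) \<and>
      internal P' \<subseteq> (internal (\<Phi> e) \<inter> verts A) \<union> (\<Union>q \<in> internal (\<Phi> e) \<inter> ?Q. \<psi> q - verts A)"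
      if e: "e \<in> edges H" for e
    proof (cases "set (\<Phi> e) \<subseteq> verts A")
      case False
      have adj: "\<exists>x\<in>\<psi> (q1 e). \<exists>y\<in>\<psi> (q2 e). {x, y} \<in> edges (delete B S)"
        using cross e False by simp
      have "spliceable ?G' (verts A) (\<Phi> e) (q1 e) (q2 e)" "q1 e \<in> ?Q" "q2 e \<in> ?Q"
        using cross e False by simp_all
      then show ?thesis by (rule spliceable_reroute[OF _ _ _ branch disjoint adj B'_G'])
    next
      case True
      then have "is_path ?G' (\<Phi> e)" "internal (\<Phi> e) \<subseteq> verts A"
        using tm e is_path_delete[of G "\<Phi> e" S] S_A by (auto simp: tm_model_def internal_def)
      then show ?thesis by blast
    qed
  qed
qed

theorem lemma4p8:
  fixes G A B :: "'a graph" and RG :: "'a set" and \<rho>G :: "'a \<Rightarrow> 'l"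
    and H :: "'b graph" and RH :: "'b set" and \<rho>H :: "'b \<Rightarrow> 'l"
    and \<phi> :: "'b \<Rightarrow> 'a" and \<Phi> :: "'b set \<Rightarrow> 'a list"
    and \<delta> :: nat and S :: "'a set"
  assumes "rooted RG \<rho>G G"
    and "separation G A B"
    and "in_folio \<delta> H RH \<rho>H G RG \<rho>G"
    and "tm_model H RH \<rho>H G RG \<rho>G \<phi> \<Phi>"
    and "RG \<union> closed_nbhd (realization H \<phi> \<Phi>) (\<phi> ` verts H) \<subseteq> verts A"
    and "S \<subseteq> verts B - verts A"
    and "generic_minor_folio (4 * \<delta>) (delete B S) (verts A \<inter> verts B)"
  shows "in_folio \<delta> H RH \<rho>H (delete G S) (RG - S) \<rho>G"
proof -
  have H: "rooted RH \<rho>H H" "card (edges H) + card (isolated H) \<le> \<delta>"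
    using assms(3) by (auto simp: in_folio_def top_minor_def)
  then have "card (edges H) \<le> 4 * \<delta>" by linarith
  moreover have "graph G" "graph H" using assms(1) H(1) by (simp_all add: rooted_def)
  ultimately obtain \<Phi>' where "tm_model H RH \<rho>H (delete G S) (RG - S) \<rho>G \<phi> \<Phi>'"
    using tm_model_avoiding_separator[OF _ assms(2) _ assms(4) _ _ _ assms(6,7)] assms(5) by blast
  then show ?thesis using H unfolding in_folio_def top_minor_def by blast
qed

end
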